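(* Let $A(z)=\sum_{k=0}^{\infty}a_kz^k$ with $a_0\neq 0$ and $H(z)=\sum_{k=1}^{\infty}h_kz^k$ with $h_1\neq 0$ be analytic in a disk $|z|<R$ with $R>1$, with real coefficients. Let the Sheffer polynomials $p_k$ be defined by $A(t)e^{xH(t)}=\sum_{k=0}^{\infty}p_k(x)t^k$ for $|t|<R$, and assume $p_k(x)\ge 0$ for all $x\ge 0$ and all $k$, $A(1)\neq 0$ and $H'(1)=1$. Let $(b_n)$ be a positive increasing sequence with $b_n\to\infty$ and $b_n/n\to 0$, and define $$T_n^*(f;x)=\frac{e^{-\frac{n}{b_n}xH(1)}}{A(1)}\sum_{k=0}^{\infty}p_k\Big(\frac{n}{b_n}x\Big)f\Big(\frac{k}{n}b_n\Big).$$ Then for every $f\in C_E[0,\infty)$ and every $a>0$, $T_n^*(f;\cdot)\to f$ uniformly on $[0,a]$ as $n\to\infty$.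
   Context: $C_E[0,\infty)$ denotes the set of continuous functions $f$ on $[0,\infty)$ such that $|f(x)|\le \beta e^{\alpha x}$ for all $x\ge 0$, for some finite positive constants $\alpha,\beta$. *)

theory Defs
  imports "HOL-Analysis.Analysis"
begin

definition pser :: "(nat \<Rightarrow> real) \<Rightarrow> real \<Rightarrow> real" where
  "pser c t = (\<Sum>k. c k * t ^ k)"

definition CE :: "(real \<Rightarrow> real) set" where
  "CE = {f. continuous_on {0..} f \<and>
            (\<exists>\<alpha> \<beta>. 0 < \<alpha> \<and> 0 < \<beta> \<and> (\<forall>x\<ge>0. \<bar>f x\<bar> \<le> \<beta> * exp (\<alpha> * x)))}"

definition Tstar :: "(nat \<Rightarrow> real) \<Rightarrow> (nat \<Rightarrow> real) \<Rightarrow> (nat \<Rightarrow> real \<Rightarrow> real) \<Rightarrow> (nat \<Rightarrow> real)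
                     \<Rightarrow> nat \<Rightarrow> (real \<Rightarrow> real) \<Rightarrow> real \<Rightarrow> real" where
  "Tstar a h p b n f x =
     exp (- (real n / b n) * x * pser h 1) / pser a 1 *
     (\<Sum>k. p k (real n / b n * x) * f (real k / real n * b n))"

end

theory Submission
  imports Defs
begin

text \<open>
  Write s_n = b_n / n. Then T_n^* f x = \<Sum>_k W_{n,x}(k) f(k s_n) with nonnegative weights summing
  to 1. Evaluating the generating function at t = exp(\<gamma> s_n) shows that the exponential moments
  \<Sum>_k W_{n,x}(k) exp(\<gamma> k s_n) equal A(exp(\<gamma> s_n)) / A(1) * exp(x (H(exp(\<gamma> s_n)) - H(1)) / s_n),
  which converge to exp(\<gamma> x) uniformly on [0,a] because H'(1) = 1.
  A Korovkin argument with exponential test functions then handles every f with |f y| \<le> \<beta> exp(\<alpha> y):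
  uniform continuity controls f y - f x for |y - x| < \<delta>, and for |y - x| \<ge> \<delta> the difference is
  bounded by a multiple of exp(-\<kappa>(x+\<delta>)) exp((\<alpha>+\<kappa>) y) + exp(\<kappa>(x-\<delta>)) exp((\<alpha>-\<kappa>) y), whose
  moments converge to a multiple of exp(-\<kappa>\<delta>), small for large \<kappa>.
\<close>

lemma exp_growth_deviation_bound:
  fixes f :: "real \<Rightarrow> real"
  assumes growth: "\<And>y. y \<ge> 0 \<Longrightarrow> \<bar>f y\<bar> \<le> \<beta> * exp (\<alpha> * y)"
    and close: "\<And>y. y \<ge> 0 \<Longrightarrow> \<bar>y - x\<bar> < \<delta> \<Longrightarrow> \<bar>f y - f x\<bar> \<le> e"
    and "\<alpha> \<ge> 0" "\<beta> \<ge> 0" "\<kappa> \<ge> 0" "e \<ge> 0" "x \<ge> 0" "y \<ge> 0"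
  shows "\<bar>f y - f x\<bar> \<le> e + 2 * \<beta> * exp (\<alpha> * x) *
           (exp (- \<kappa> * (x + \<delta>)) * exp ((\<alpha> + \<kappa>) * y) + exp (\<kappa> * (x - \<delta>)) * exp ((\<alpha> - \<kappa>) * y))"
    (is "_ \<le> e + ?C * (?T1 + ?T2)")
proof -
  have C: "?C \<ge> 0" using assms by simp
  \<comment> \<open>Off the \<delta>-neighbourhood of x one of the factors exp (\<plusminus>\<kappa> (y - x) - \<kappa> \<delta>) is at least 1.\<close>
  have T1: "?T1 = exp (\<alpha> * y) * exp (\<kappa> * (y - x - \<delta>))"
   and T2: "?T2 = exp (\<alpha> * y) * exp (\<kappa> * (x - \<delta> - y))"
    by (simp_all add: exp_add[symmetric] algebra_simps)
  show ?thesis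
  proof (cases "\<bar>y - x\<bar> < \<delta>")
    case True
    with close \<open>y \<ge> 0\<close> C show ?thesis by (simp add: add_increasing2)
  next
    case False
    have "\<bar>f y - f x\<bar> \<le> \<beta> * exp (\<alpha> * y) + \<beta> * exp (\<alpha> * x)"
      using growth[of y] growth[of x] assms by linarith
    also have "\<dots> \<le> ?C * exp (\<alpha> * y)"
    proof -
      have "exp (\<alpha> * y) \<le> exp (\<alpha> * x) * exp (\<alpha> * y)" "exp (\<alpha> * x) \<le> exp (\<alpha> * x) * exp (\<alpha> * y)"
        using assms by simp_all
      from mult_left_mono[OF add_mono[OF this] \<open>\<beta> \<ge> 0\<close>]
      show ?thesis by (simp add: algebra_simps)
    qed
    also have "exp (\<alpha> * y) \<le> ?T1 + ?T2"
    proof (cases "y \<ge> x + \<delta>")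
      case True
      then show ?thesis using \<open>\<kappa> \<ge> 0\<close> unfolding T1 T2 by (simp add: add_increasing2)
    next
      case False
      with \<open>\<not> \<bar>y - x\<bar> < \<delta>\<close> have "y \<le> x - \<delta>" by linarith
      then show ?thesis using \<open>\<kappa> \<ge> 0\<close> unfolding T1 T2 by (simp add: add_increasing)
    qed
    hence "?C * exp (\<alpha> * y) \<le> ?C * (?T1 + ?T2)" using C by (rule mult_left_mono)
    finally show ?thesis using \<open>e \<ge> 0\<close> by linarith
  qed
qed

lemma summable_weighted_exp_growth:
  fixes f :: "real \<Rightarrow> real"
  assumes "\<And>k. w k \<ge> 0" "\<And>k. y k \<ge> 0"
    and growth: "\<And>y. y \<ge> 0 \<Longrightarrow> \<bar>f y\<bar> \<le> \<beta> * exp (\<alpha> * y)"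
    and moment: "summable (\<lambda>k. w k * exp (\<alpha> * y k))"
  shows "summable (\<lambda>k. w k * f (y k))"
proof (rule summable_comparison_test'[where N = 0])
  show "summable (\<lambda>k. \<beta> * (w k * exp (\<alpha> * y k)))"
    using moment by simp
  show "norm (w k * f (y k)) \<le> \<beta> * (w k * exp (\<alpha> * y k))" for k
    using mult_left_mono[OF growth[OF assms(2)] assms(1)] assms(1)[of k]
    by (simp add: abs_mult algebra_simps)
qed

lemma kernel_deviation_bound:
  fixes f :: "real \<Rightarrow> real"
  assumes w_nonneg: "\<And>k. w k \<ge> 0" and w_sums: "w sums 1" and y_nonneg: "\<And>k. y k \<ge> 0"
    and moment: "summable (\<lambda>k. w k * exp ((\<alpha> + \<kappa>) * y k))"
    and growth: "\<And>y. y \<ge> 0 \<Longrightarrow> \<bar>f y\<bar> \<le> \<beta> * exp (\<alpha> * y)"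
    and close: "\<And>y. y \<ge> 0 \<Longrightarrow> \<bar>y - x\<bar> < \<delta> \<Longrightarrow> \<bar>f y - f x\<bar> \<le> e"
    and "\<alpha> \<ge> 0" "\<beta> \<ge> 0" "\<kappa> \<ge> 0" "e \<ge> 0" "x \<ge> 0"
  shows "\<bar>(\<Sum>k. w k * f (y k)) - f x\<bar> \<le> e + 2 * \<beta> * exp (\<alpha> * x) *
           (exp (- \<kappa> * (x + \<delta>)) * (\<Sum>k. w k * exp ((\<alpha> + \<kappa>) * y k)) +
            exp (\<kappa> * (x - \<delta>)) * (\<Sum>k. w k * exp ((\<alpha> - \<kappa>) * y k)))"
proof -
  have summable_exp: "summable (\<lambda>k. w k * exp (\<gamma> * y k))" if "\<gamma> \<le> \<alpha> + \<kappa>" for \<gamma>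
    using that y_nonneg
    by (intro summable_weighted_exp_growth[OF w_nonneg y_nonneg _ moment, where \<beta> = 1])
       (simp add: mult_right_mono)
  have summable_f: "summable (\<lambda>k. w k * f (y k))"
  proof (rule summable_weighted_exp_growth[OF w_nonneg y_nonneg _ moment])
    show "\<bar>f y\<bar> \<le> \<beta> * exp ((\<alpha> + \<kappa>) * y)" if "y \<ge> 0" for y
    proof -
      have "exp (\<alpha> * y) \<le> exp ((\<alpha> + \<kappa>) * y)"
        using that \<open>\<kappa> \<ge> 0\<close> by (simp add: distrib_right)
      from order_trans[OF growth[OF that] mult_left_mono[OF this \<open>\<beta> \<ge> 0\<close>]] show ?thesis .
    qed
  qed
  define B where "B v = e + 2 * \<beta> * exp (\<alpha> * x) *
    (exp (- \<kappa> * (x + \<delta>)) * exp ((\<alpha> + \<kappa>) * v) + exp (\<kappa> * (x - \<delta>)) * exp ((\<alpha> - \<kappa>) * v))" for v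
  define C_up where "C_up = 2 * \<beta> * exp (\<alpha> * x) * exp (- \<kappa> * (x + \<delta>))"
  define C_down where "C_down = 2 * \<beta> * exp (\<alpha> * x) * exp (\<kappa> * (x - \<delta>))"
  have "(\<lambda>k. e * w k + C_up * (w k * exp ((\<alpha> + \<kappa>) * y k)) + C_down * (w k * exp ((\<alpha> - \<kappa>) * y k)))
          sums (e * 1 + C_up * (\<Sum>k. w k * exp ((\<alpha> + \<kappa>) * y k)) + C_down * (\<Sum>k. w k * exp ((\<alpha> - \<kappa>) * y k)))"
    by (intro sums_add sums_mult w_sums summable_sums summable_exp) (use \<open>\<kappa> \<ge> 0\<close> in auto)
  moreover have "(\<lambda>k. w k * B (y k)) = (\<lambda>k. e * w k + C_up * (w k * exp ((\<alpha> + \<kappa>) * y k)) + C_down * (w k * exp ((\<alpha> - \<kappa>) * y k)))"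
    by (simp add: B_def C_up_def C_down_def fun_eq_iff algebra_simps)
  ultimately have B_sums: "(\<lambda>k. w k * B (y k)) sums (e + 2 * \<beta> * exp (\<alpha> * x) *
           (exp (- \<kappa> * (x + \<delta>)) * (\<Sum>k. w k * exp ((\<alpha> + \<kappa>) * y k)) +
            exp (\<kappa> * (x - \<delta>)) * (\<Sum>k. w k * exp ((\<alpha> - \<kappa>) * y k))))"
    by (simp add: C_up_def C_down_def algebra_simps)
  have "(\<lambda>k. w k * (f (y k) - f x)) sums ((\<Sum>k. w k * f (y k)) - 1 * f x)"
    unfolding right_diff_distrib by (intro sums_diff summable_sums summable_f sums_mult2 w_sums)
  hence "(\<Sum>k. w k * f (y k)) - f x = (\<Sum>k. w k * (f (y k) - f x))"
    by (simp add: sums_iff)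
  also have "\<bar>\<dots>\<bar> \<le> (\<Sum>k. w k * B (y k))"
  proof (rule norm_suminf_le[where 'a = real, unfolded real_norm_def])
    show "\<bar>w k * (f (y k) - f x)\<bar> \<le> w k * B (y k)" for k
      unfolding abs_mult B_def abs_of_nonneg[OF w_nonneg]
      by (intro mult_left_mono exp_growth_deviation_bound[OF growth close]) (use assms in auto)
  qed (use B_sums in \<open>simp add: sums_iff\<close>)
  finally show ?thesis using B_sums by (simp add: sums_iff)
qed

lemma continuous_on_atLeast_uniform_modulus:
  fixes f :: "real \<Rightarrow> real"
  assumes "continuous_on {0..} f" "e > 0"
  obtains \<delta> where "\<delta> > 0" "\<And>x y. x \<in> {0..c} \<Longrightarrow> y \<ge> 0 \<Longrightarrow> \<bar>y - x\<bar> < \<delta> \<Longrightarrow> \<bar>f y - f x\<bar> \<le> e"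
proof -
  have "uniformly_continuous_on {0..c+1} f"
    by (rule compact_uniformly_continuous) (auto intro: continuous_on_subset[OF assms(1)])
  then obtain d where "d > 0"
    and d: "\<And>x y. x \<in> {0..c+1} \<Longrightarrow> y \<in> {0..c+1} \<Longrightarrow> dist y x < d \<Longrightarrow> dist (f y) (f x) < e"
    using \<open>e > 0\<close> unfolding uniformly_continuous_on_def by blast
  show ?thesis
  proof
    show "min d 1 > 0" using \<open>d > 0\<close> by simp
    fix x y assume "x \<in> {0..c}" "y \<ge> 0" "\<bar>y - x\<bar> < min d 1"
    moreover from this have "y \<in> {0..c+1}" by auto
    ultimately show "\<bar>f y - f x\<bar> \<le> e" using d[of x y] by (simp add: dist_real_def)
  qed
qed

lemma exp_neg_mult_less_obtain:
  fixes \<delta> r :: real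
  assumes "\<delta> > 0" "r > 0"
  obtains \<kappa> where "\<kappa> \<ge> 0" "exp (- (\<kappa> * \<delta>)) < r"
proof
  show "(\<bar>ln r\<bar> + 1) / \<delta> \<ge> 0" using \<open>\<delta> > 0\<close> by simp
  have "- ((\<bar>ln r\<bar> + 1) / \<delta> * \<delta>) < ln r" using \<open>\<delta> > 0\<close> by simp
  thus "exp (- ((\<bar>ln r\<bar> + 1) / \<delta> * \<delta>)) < r"
    using \<open>r > 0\<close> by (metis exp_less_cancel_iff exp_ln)
qed

lemma uniform_limit_eventually_less:
  fixes F :: "'a \<Rightarrow> 'b \<Rightarrow> real"
  assumes "uniform_limit S F g L" "\<And>x. x \<in> S \<Longrightarrow> g x \<le> m" "m < M"
  shows "eventually (\<lambda>n. \<forall>x\<in>S. F n x < M) L"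
  using uniform_limitD[OF assms(1), of "M - m"] assms(2,3)
  by (auto elim!: eventually_mono simp: dist_real_def abs_less_iff) (smt (verit))

lemma uniform_limit_kernel_of_exp_moments:
  fixes W :: "nat \<Rightarrow> real \<Rightarrow> nat \<Rightarrow> real" and y :: "nat \<Rightarrow> nat \<Rightarrow> real" and f :: "real \<Rightarrow> real"
  assumes W_nonneg: "\<And>n x k. x \<in> {0..c} \<Longrightarrow> W n x k \<ge> 0"
    and y_nonneg: "\<And>n k. y n k \<ge> 0"
    and W_sums: "eventually (\<lambda>n. \<forall>x\<in>{0..c}. W n x sums 1) sequentially"
    and moment_summable:
      "\<And>\<gamma>. eventually (\<lambda>n. \<forall>x\<in>{0..c}. summable (\<lambda>k. W n x k * exp (\<gamma> * y n k))) sequentially"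
    and moment_limit:
      "\<And>\<gamma>. uniform_limit {0..c} (\<lambda>n x. \<Sum>k. W n x k * exp (\<gamma> * y n k)) (\<lambda>x. exp (\<gamma> * x)) sequentially"
    and f: "f \<in> CE"
  shows "uniform_limit {0..c} (\<lambda>n x. \<Sum>k. W n x k * f (y n k)) f sequentially"
  unfolding uniform_limit_iff
proof (intro allI impI)
  fix \<epsilon> :: real assume "\<epsilon> > 0"
  from f obtain \<alpha> \<beta> where f_cont: "continuous_on {0..} f" and "\<alpha> > 0" "\<beta> > 0"
    and growth: "\<And>y. y \<ge> 0 \<Longrightarrow> \<bar>f y\<bar> \<le> \<beta> * exp (\<alpha> * y)"
    unfolding CE_def by auto
  obtain \<delta> where "\<delta> > 0" and close: "\<And>x y. x \<in> {0..c} \<Longrightarrow> y \<ge> 0 \<Longrightarrow> \<bar>y - x\<bar> < \<delta> \<Longrightarrow> \<bar>f y - f x\<bar> \<le> \<epsilon> / 3"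
    using continuous_on_atLeast_uniform_modulus[OF f_cont] \<open>\<epsilon> > 0\<close> by (metis zero_less_divide_iff zero_less_numeral)
  define K where "K = 4 * \<beta> * exp (2 * \<alpha> * c)"
  have "K > 0" using \<open>\<beta> > 0\<close> by (simp add: K_def)
  obtain \<kappa> where "\<kappa> \<ge> 0" and "exp (- (\<kappa> * \<delta>)) < \<epsilon> / (3 * K)"
    using exp_neg_mult_less_obtain[OF \<open>\<delta> > 0\<close>, of "\<epsilon> / (3 * K)"] \<open>\<epsilon> > 0\<close> \<open>K > 0\<close> by auto
  hence K_small: "K * exp (- (\<kappa> * \<delta>)) < \<epsilon> / 3"
    using \<open>K > 0\<close> by (simp add: field_simps)
  define g\<^sub>1 where "g\<^sub>1 x = 2 * \<beta> * exp (\<alpha> * x) * exp (- \<kappa> * (x + \<delta>))" for x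
  define g\<^sub>2 where "g\<^sub>2 x = 2 * \<beta> * exp (\<alpha> * x) * exp (\<kappa> * (x - \<delta>))" for x
  define M where "M n \<gamma> x = (\<Sum>k. W n x k * exp (\<gamma> * y n k))" for n \<gamma> x
  have bounded: "bounded (g ` {0..c})" if "continuous_on {0..c} g" for g :: "real \<Rightarrow> real"
    using compact_imp_bounded[OF compact_continuous_image[OF that]] by simp
  have "uniform_limit {0..c} (\<lambda>n x. \<epsilon> / 3 + (g\<^sub>1 x * M n (\<alpha> + \<kappa>) x + g\<^sub>2 x * M n (\<alpha> - \<kappa>) x))
          (\<lambda>x. \<epsilon> / 3 + (g\<^sub>1 x * exp ((\<alpha> + \<kappa>) * x) + g\<^sub>2 x * exp ((\<alpha> - \<kappa>) * x))) sequentially"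
    unfolding M_def g\<^sub>1_def g\<^sub>2_def
    by (intro uniform_limit_intros moment_limit bounded continuous_intros)
  moreover have "\<epsilon> / 3 + (g\<^sub>1 x * exp ((\<alpha> + \<kappa>) * x) + g\<^sub>2 x * exp ((\<alpha> - \<kappa>) * x)) \<le> 2 * \<epsilon> / 3"
    if "x \<in> {0..c}" for x
  proof -
    have "g\<^sub>1 x * exp ((\<alpha> + \<kappa>) * x) + g\<^sub>2 x * exp ((\<alpha> - \<kappa>) * x) = 4 * \<beta> * exp (2 * \<alpha> * x) * exp (- (\<kappa> * \<delta>))"
        by (simp add: g\<^sub>1_def g\<^sub>2_def exp_add[symmetric] algebra_simps)
    also have "\<dots> \<le> K * exp (- (\<kappa> * \<delta>))"
      using that \<open>\<alpha> > 0\<close> \<open>\<beta> > 0\<close> by (simp add: K_def)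
    finally show ?thesis using K_small by linarith
  qed
  ultimately have bound_small: "eventually (\<lambda>n. \<forall>x\<in>{0..c}.
      \<epsilon> / 3 + (g\<^sub>1 x * M n (\<alpha> + \<kappa>) x + g\<^sub>2 x * M n (\<alpha> - \<kappa>) x) < \<epsilon>) sequentially"
    by (rule uniform_limit_eventually_less) (use \<open>\<epsilon> > 0\<close> in auto)
  show "eventually (\<lambda>n. \<forall>x\<in>{0..c}. dist (\<Sum>k. W n x k * f (y n k)) (f x) < \<epsilon>) sequentially"
    using W_sums moment_summable[of "\<alpha> + \<kappa>"] bound_small
  proof eventually_elim
    case (elim n)
    show ?case
    proof
      fix x assume x: "x \<in> {0..c}"
      have "\<bar>(\<Sum>k. W n x k * f (y n k)) - f x\<bar> \<le> \<epsilon> / 3 + 2 * \<beta> * exp (\<alpha> * x) *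
          (exp (- \<kappa> * (x + \<delta>)) * M n (\<alpha> + \<kappa>) x + exp (\<kappa> * (x - \<delta>)) * M n (\<alpha> - \<kappa>) x)"
        unfolding M_def
      proof (rule kernel_deviation_bound[OF W_nonneg[OF x] _ y_nonneg _ growth close[OF x]])
        show "W n x sums 1" "summable (\<lambda>k. W n x k * exp ((\<alpha> + \<kappa>) * y n k))"
          using elim(1,2) x by blast+
      qed (use x \<open>\<alpha> > 0\<close> \<open>\<beta> > 0\<close> \<open>\<kappa> \<ge> 0\<close> \<open>\<epsilon> > 0\<close> in auto)
      also have "\<dots> = \<epsilon> / 3 + (g\<^sub>1 x * M n (\<alpha> + \<kappa>) x + g\<^sub>2 x * M n (\<alpha> - \<kappa>) x)"
        by (simp add: g\<^sub>1_def g\<^sub>2_def distrib_left mult.assoc)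
      finally show "dist (\<Sum>k. W n x k * f (y n k)) (f x) < \<epsilon>"
        using elim(3) x by (fastforce simp: dist_real_def)
    qed
  qed
qed

lemma uniform_limit_exp_mult_tendsto:
  fixes q :: "nat \<Rightarrow> real"
  assumes q: "q \<longlonglongrightarrow> \<gamma>" and "compact S"
  shows "uniform_limit S (\<lambda>n x. exp (x * q n)) (\<lambda>x. exp (x * \<gamma>)) sequentially"
proof -
  obtain K where K: "\<And>x. x \<in> S \<Longrightarrow> \<bar>x\<bar> \<le> K"
    using compact_imp_bounded[OF \<open>compact S\<close>] by (auto simp: bounded_iff)
  have "uniform_limit S (\<lambda>n x. q n) (\<lambda>x. \<gamma>) sequentially"
    using q unfolding uniform_limit_iff tendsto_iff by simp
  hence "uniform_limit S (\<lambda>n x. x * q n) (\<lambda>x. x * \<gamma>) sequentially"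
    using compact_imp_bounded[OF \<open>compact S\<close>]
    by (intro uniform_lim_mult uniform_limit_const) (auto simp: image_def)
  moreover have "uniformly_continuous_on {-(K * (\<bar>\<gamma>\<bar> + 1))..K * (\<bar>\<gamma>\<bar> + 1)} exp"
    by (intro compact_uniformly_continuous continuous_intros) auto
  moreover have "eventually (\<lambda>n. \<forall>x\<in>S. x * q n \<in> {-(K * (\<bar>\<gamma>\<bar> + 1))..K * (\<bar>\<gamma>\<bar> + 1)}) sequentially"
  proof -
    have "eventually (\<lambda>n. \<bar>q n - \<gamma>\<bar> < 1) sequentially"
      using q unfolding tendsto_iff dist_real_def by simp
    thus ?thesis
    proof eventually_elim
      case (elim n)
      have "\<bar>x * q n\<bar> \<le> K * (\<bar>\<gamma>\<bar> + 1)" if "x \<in> S" for x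
        unfolding abs_mult using K[OF that] elim by (intro mult_mono) auto
      thus ?case by (metis abs_le_iff atLeastAtMost_iff minus_le_iff)
    qed
  qed
  ultimately show ?thesis
    by (rule uniform_limit_compose_uniformly_continuous_on) auto
qed

lemma tendsto_exp_difference_quotient:
  fixes H :: "real \<Rightarrow> real" and s :: "nat \<Rightarrow> real"
  assumes H': "(H has_real_derivative D) (at 1)"
    and s: "s \<longlonglongrightarrow> 0" "eventually (\<lambda>n. s n \<noteq> 0) sequentially"
  shows "(\<lambda>n. (H (exp (\<gamma> * s n)) - H 1) / s n) \<longlonglongrightarrow> \<gamma> * D"
proof -
  have "((\<lambda>v. H (exp (\<gamma> * v))) has_real_derivative D * (exp (\<gamma> * 0) * \<gamma>)) (at 0)"
    by (rule DERIV_chain2[where f = H]) (use H' in \<open>auto intro!: derivative_eq_intros\<close>)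
  hence "((\<lambda>v. (H (exp (\<gamma> * v)) - H 1) / v) \<longlongrightarrow> \<gamma> * D) (at 0)"
    unfolding has_field_derivative_iff by (simp add: mult.commute)
  moreover have "filterlim s (at 0) sequentially"
    using s by (auto simp: filterlim_at elim: eventually_mono)
  ultimately show ?thesis by (rule filterlim_compose)
qed

lemma uniform_limit_generating_exp_moment:
  fixes A H :: "real \<Rightarrow> real" and s :: "nat \<Rightarrow> real"
  assumes "isCont A 1" "A 1 \<noteq> 0" and H': "(H has_real_derivative 1) (at 1)"
    and s: "s \<longlonglongrightarrow> 0" "eventually (\<lambda>n. s n \<noteq> 0) sequentially" and "compact S"
  shows "uniform_limit S (\<lambda>n x. A (exp (\<gamma> * s n)) / A 1 * exp (x * ((H (exp (\<gamma> * s n)) - H 1) / s n)))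
           (\<lambda>x. exp (\<gamma> * x)) sequentially"
proof -
  have "(\<lambda>n. exp (\<gamma> * s n)) \<longlonglongrightarrow> 1"
    using s(1) by (auto intro!: tendsto_eq_intros)
  from isCont_tendsto_compose[OF \<open>isCont A 1\<close> this]
  have "(\<lambda>n. A (exp (\<gamma> * s n)) / A 1) \<longlonglongrightarrow> 1"
    using \<open>A 1 \<noteq> 0\<close> by (auto intro!: tendsto_eq_intros)
  hence "uniform_limit S (\<lambda>n x. A (exp (\<gamma> * s n)) / A 1) (\<lambda>x. 1) sequentially"
    unfolding uniform_limit_iff tendsto_iff by simp
  moreover have "uniform_limit S (\<lambda>n x. exp (x * ((H (exp (\<gamma> * s n)) - H 1) / s n))) (\<lambda>x. exp (x * (\<gamma> * 1))) sequentially"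
    by (intro uniform_limit_exp_mult_tendsto tendsto_exp_difference_quotient H' s \<open>compact S\<close>)
  moreover have "bounded ((\<lambda>x. exp (x * (\<gamma> * 1))) ` S)"
    by (intro compact_imp_bounded compact_continuous_image continuous_intros \<open>compact S\<close>)
  ultimately have "uniform_limit S (\<lambda>n x. A (exp (\<gamma> * s n)) / A 1 * exp (x * ((H (exp (\<gamma> * s n)) - H 1) / s n)))
      (\<lambda>x. 1 * exp (x * (\<gamma> * 1))) sequentially"
    by (intro uniform_lim_mult) (auto intro: bounded_subset[of "{1}"])
  thus ?thesis by (rule uniform_limit_eq_rhs) (simp add: mult.commute)
qed

lemma sheffer_kernel_exp_moment_sums:
  fixes p :: "nat \<Rightarrow> real \<Rightarrow> real" and A H :: "real \<Rightarrow> real"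
  assumes "(\<lambda>k. p k (x / s) * exp (\<gamma> * s) ^ k) sums (A (exp (\<gamma> * s)) * exp (x / s * H (exp (\<gamma> * s))))"
  shows "(\<lambda>k. exp (- (x / s) * H 1) / A 1 * p k (x / s) * exp (\<gamma> * (real k * s)))
           sums (A (exp (\<gamma> * s)) / A 1 * exp (x * ((H (exp (\<gamma> * s)) - H 1) / s)))"
proof -
  define C where "C = exp (- (x / s) * H 1) / A 1"
  have "(\<lambda>k. C * (p k (x / s) * exp (\<gamma> * s) ^ k)) sums (C * (A (exp (\<gamma> * s)) * exp (x / s * H (exp (\<gamma> * s)))))"
    by (rule sums_mult[OF assms])
  moreover have "C * (p k (x / s) * exp (\<gamma> * s) ^ k) = C * p k (x / s) * exp (\<gamma> * (real k * s))" for k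
    by (simp add: exp_of_nat_mult[symmetric] mult.left_commute)
  moreover have "C * (A t * exp (x / s * H t)) = A t / A 1 * exp (x * ((H t - H 1) / s))" for t
    by (simp add: C_def exp_add[symmetric] diff_divide_distrib algebra_simps)
  ultimately show ?thesis unfolding C_def[symmetric] by simp
qed

lemma eventually_sheffer_kernel_exp_moment_sums:
  fixes p :: "nat \<Rightarrow> real \<Rightarrow> real" and A H :: "real \<Rightarrow> real" and s :: "nat \<Rightarrow> real"
  assumes gen: "\<And>x t. \<bar>t\<bar> < R \<Longrightarrow> (\<lambda>k. p k x * t ^ k) sums (A t * exp (x * H t))"
    and "R > 1" "s \<longlonglongrightarrow> 0"
  shows "eventually (\<lambda>n. \<forall>x. (\<lambda>k. exp (- (x / s n) * H 1) / A 1 * p k (x / s n) * exp (\<gamma> * (real k * s n)))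
           sums (A (exp (\<gamma> * s n)) / A 1 * exp (x * ((H (exp (\<gamma> * s n)) - H 1) / s n)))) sequentially"
proof -
  have "(\<lambda>n. exp (\<gamma> * s n)) \<longlonglongrightarrow> 1"
    using \<open>s \<longlonglongrightarrow> 0\<close> by (auto intro!: tendsto_eq_intros)
  hence "eventually (\<lambda>n. exp (\<gamma> * s n) < R) sequentially"
    using \<open>R > 1\<close> by (simp add: order_tendstoD(2))
  thus ?thesis
    by eventually_elim (intro allI sheffer_kernel_exp_moment_sums gen, simp)
qed

lemma sheffer_generating_at_one_pos:
  fixes p :: "nat \<Rightarrow> real \<Rightarrow> real" and A H :: "real \<Rightarrow> real"
  assumes gen: "\<And>x t. \<bar>t\<bar> < R \<Longrightarrow> (\<lambda>k. p k x * t ^ k) sums (A t * exp (x * H t))"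
    and "R > 1" "\<And>k. p k 0 \<ge> 0" "A 1 \<noteq> 0"
  shows "A 1 > 0"
proof -
  have "(\<lambda>k. p k 0) sums A 1"
    using gen[of 1 0] \<open>R > 1\<close> by simp
  with assms(3,4) show ?thesis
    using sums_le[OF _ sums_zero, of "\<lambda>k. p k 0"] by force
qed

lemma uniform_limit_sheffer_operator:
  fixes A H :: "real \<Rightarrow> real" and p :: "nat \<Rightarrow> real \<Rightarrow> real" and s :: "nat \<Rightarrow> real"
  assumes gen: "\<And>x t. \<bar>t\<bar> < R \<Longrightarrow> (\<lambda>k. p k x * t ^ k) sums (A t * exp (x * H t))"
    and "R > 1" and p_nonneg: "\<And>k x. x \<ge> 0 \<Longrightarrow> p k x \<ge> 0"
    and "isCont A 1" "A 1 \<noteq> 0" and H': "(H has_real_derivative 1) (at 1)"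
    and s: "s \<longlonglongrightarrow> 0" "\<And>n. s n \<ge> 0" "eventually (\<lambda>n. s n \<noteq> 0) sequentially"
    and f: "f \<in> CE"
  shows "uniform_limit {0..c}
           (\<lambda>n x. exp (- (x / s n) * H 1) / A 1 * (\<Sum>k. p k (x / s n) * f (real k * s n))) f sequentially"
proof -
  have "A 1 > 0"
    using sheffer_generating_at_one_pos[OF gen \<open>R > 1\<close> p_nonneg \<open>A 1 \<noteq> 0\<close>] by simp
  define W where "W n x k = exp (- (x / s n) * H 1) / A 1 * p k (x / s n)" for n x k
  define y where "y n k = real k * s n" for n k
  define L where "L n \<gamma> x = A (exp (\<gamma> * s n)) / A 1 * exp (x * ((H (exp (\<gamma> * s n)) - H 1) / s n))" for n \<gamma> x
  have W_nonneg: "W n x k \<ge> 0" if "x \<in> {0..c}" for n x k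
    using that p_nonneg s(2)[of n] \<open>A 1 > 0\<close> by (simp add: W_def)
  have moment_sums:
    "eventually (\<lambda>n. \<forall>x\<in>{0..c}. (\<lambda>k. W n x k * exp (\<gamma> * y n k)) sums L n \<gamma> x) sequentially" for \<gamma>
    using eventually_sheffer_kernel_exp_moment_sums[OF gen \<open>R > 1\<close> s(1), of \<gamma>]
    unfolding W_def y_def L_def by (auto elim!: eventually_mono)
  have "uniform_limit {0..c} (\<lambda>n x. \<Sum>k. W n x k * f (y n k)) f sequentially"
  proof (rule uniform_limit_kernel_of_exp_moments[OF W_nonneg _ _ _ _ f])
    show "y n k \<ge> 0" for n k
      using s(2) by (simp add: y_def)
    show "eventually (\<lambda>n. \<forall>x\<in>{0..c}. W n x sums 1) sequentially"
      using moment_sums[of 0] \<open>A 1 \<noteq> 0\<close> by (simp add: L_def)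
    show "eventually (\<lambda>n. \<forall>x\<in>{0..c}. summable (\<lambda>k. W n x k * exp (\<gamma> * y n k))) sequentially" for \<gamma>
      using moment_sums[of \<gamma>] by (auto elim!: eventually_mono intro: sums_summable)
    show "uniform_limit {0..c} (\<lambda>n x. \<Sum>k. W n x k * exp (\<gamma> * y n k)) (\<lambda>x. exp (\<gamma> * x)) sequentially" for \<gamma>
    proof -
      have "uniform_limit {0..c} (\<lambda>n. L n \<gamma>) (\<lambda>x. exp (\<gamma> * x)) sequentially"
        unfolding L_def
        by (rule uniform_limit_generating_exp_moment) (use \<open>isCont A 1\<close> \<open>A 1 \<noteq> 0\<close> H' s in auto)
      moreover have "eventually (\<lambda>n. \<forall>x\<in>{0..c}. L n \<gamma> x = (\<Sum>k. W n x k * exp (\<gamma> * y n k))) sequentially"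
        using moment_sums[of \<gamma>] by (auto elim!: eventually_mono simp: sums_iff)
      ultimately show ?thesis by (simp add: uniform_limit_cong)
    qed
  qed
  moreover have "eventually (\<lambda>n. \<forall>x\<in>{0..c}.
      (\<Sum>k. W n x k * f (y n k)) = exp (- (x / s n) * H 1) / A 1 * (\<Sum>k. p k (x / s n) * f (real k * s n)))
      sequentially"
  proof -
    from f obtain \<alpha> \<beta> where growth: "\<And>y. y \<ge> 0 \<Longrightarrow> \<bar>f y\<bar> \<le> \<beta> * exp (\<alpha> * y)"
      unfolding CE_def by auto
    show ?thesis
      using moment_sums[of \<alpha>]
    proof eventually_elim
      case (elim n)
      show ?case
      proof
        fix x assume "x \<in> {0..c}"
        with elim have "summable (\<lambda>k. W n x k * f (y n k))"
          by (intro summable_weighted_exp_growth[OF W_nonneg _ growth])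
             (auto simp: y_def s(2) intro: sums_summable)
        hence "summable (\<lambda>k. p k (x / s n) * f (real k * s n))"
          using \<open>A 1 \<noteq> 0\<close> by (simp add: W_def y_def mult.assoc)
        thus "(\<Sum>k. W n x k * f (y n k)) = exp (- (x / s n) * H 1) / A 1 * (\<Sum>k. p k (x / s n) * f (real k * s n))"
          unfolding W_def y_def mult.assoc by (rule suminf_mult)
      qed
    qed
  qed
  ultimately show ?thesis by (simp add: uniform_limit_cong)
qed

theorem theorem2p2:
  fixes a h :: "nat \<Rightarrow> real" and R :: real
    and p :: "nat \<Rightarrow> real \<Rightarrow> real" and b :: "nat \<Rightarrow> real"
  assumes R: "R > 1"
    and a_conv: "\<And>t. \<bar>t\<bar> < R \<Longrightarrow> summable (\<lambda>k. a k * t ^ k)"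
    and h_conv: "\<And>t. \<bar>t\<bar> < R \<Longrightarrow> summable (\<lambda>k. h k * t ^ k)"
    and a0: "a 0 \<noteq> 0"
    and h0: "h 0 = 0" and h1: "h 1 \<noteq> 0"
    and gen: "\<And>x t. \<bar>t\<bar> < R \<Longrightarrow>
               (\<lambda>k. p k x * t ^ k) sums (pser a t * exp (x * pser h t))"
    and p_nonneg: "\<And>k x. x \<ge> 0 \<Longrightarrow> p k x \<ge> 0"
    and A1: "pser a 1 \<noteq> 0"
    and H'1: "(pser h has_real_derivative 1) (at 1)"
    and b_pos: "\<And>n. b n > 0"
    and b_mono: "incseq b"
    and b_inf: "filterlim b at_top sequentially"
    and b_o: "(\<lambda>n. b n / real n) \<longlonglongrightarrow> 0"
    and f: "f \<in> CE"
    and apos: "c > 0"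
  shows "uniform_limit {0..c} (\<lambda>n x. Tstar a h p b n f x) f sequentially"
proof -
  define s where "s n = b n / real n" for n
  \<comment> \<open>For n = 0 both sides degenerate consistently, since x / 0 = 0.\<close>
  have Tstar_eq: "Tstar a h p b n f x =
      exp (- (x / s n) * pser h 1) / pser a 1 * (\<Sum>k. p k (x / s n) * f (real k * s n))" for n x
    using b_pos[of n] by (cases "n = 0") (simp_all add: Tstar_def s_def field_simps)
  have "isCont (pser a) 1"
    unfolding pser_def[abs_def]
    by (rule isCont_powser[where K = "(1 + R) / 2"]) (use a_conv R in auto)
  moreover have "eventually (\<lambda>n. s n \<noteq> 0) sequentially"
    using eventually_gt_at_top[of 0] by eventually_elim (simp add: s_def less_imp_neq[OF b_pos, symmetric])
  moreover have "s n \<ge> 0" for n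
    using b_pos[of n] by (simp add: s_def)
  ultimately have "uniform_limit {0..c}
      (\<lambda>n x. exp (- (x / s n) * pser h 1) / pser a 1 * (\<Sum>k. p k (x / s n) * f (real k * s n))) f sequentially"
    using b_o unfolding s_def[abs_def]
    by (intro uniform_limit_sheffer_operator[OF gen R p_nonneg _ A1 H'1 _ _ _ f]) auto
  thus ?thesis by (simp add: Tstar_eq)
qed

end
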